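(* Let $n \geq 2$, $d \geq 1$, $g \geq 0$ be integers satisfying $g < d^2/4n + 1$. Then there are integers $d_0 \geq 1$ and $g_0 \geq 0$ such that $d_0 \equiv d \pmod{2n}$ and $d_0^2-4n(g_0-1)=d^2-4n(g-1)$, and satisfying one of the two following conditions: (a) $g_0 < d_0-n$; (b) $d_0 \leq 2n$ and $d_0-n \leq g_0 < d_0^2/4n + 1$. *)

theory Defs
  imports Complex_Main "HOL-Number_Theory.Cong"
begin

end

theory Submission
  imports Defs
begin

text \<open>The substitution \<open>(d, g) \<mapsto> (d - 2n, g - d + n)\<close> preserves \<open>d\<close> modulo \<open>2n\<close> and the
  discriminant \<open>d\<^sup>2 - 4n(g - 1)\<close>, and it keeps \<open>d \<ge> 1\<close>, \<open>g \<ge> 0\<close> as long as \<open>d > 2n\<close> and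
  \<open>g \<ge> d - n\<close>. Applying it until one of these fails ends in case (a) or in \<open>d \<le> 2n \<le> g + n\<close>.
  The bound \<open>g < d\<^sup>2/4n + 1\<close> says that the discriminant is positive, so it persists.\<close>

definition discriminant :: "int \<Rightarrow> int \<Rightarrow> int \<Rightarrow> int" where
  "discriminant n d g = d\<^sup>2 - 4 * n * (g - 1)"

lemma discriminant_reduce: "discriminant n (d - 2 * n) (g - d + n) = discriminant n d g"
  unfolding discriminant_def by (simp add: power2_eq_square algebra_simps)

lemma discriminant_descent:
  fixes n d g :: int
  assumes "n > 0" and "d \<ge> 1" and "g \<ge> 0"
  shows "\<exists>d0 g0. d0 \<ge> 1 \<and> g0 \<ge> 0 \<and> [d0 = d] (mod (2 * n)) \<and>
           discriminant n d0 g0 = discriminant n d g \<and>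
           (g0 < d0 - n \<or> (d0 \<le> 2 * n \<and> d0 - n \<le> g0))"
  using assms(2,3)
proof (induction "nat d" arbitrary: d g rule: less_induct)
  case less
  show ?case
  proof (cases "g < d - n \<or> d \<le> 2 * n")
    case True
    then have "d \<ge> 1 \<and> g \<ge> 0 \<and> [d = d] (mod (2 * n)) \<and>
        discriminant n d g = discriminant n d g \<and> (g < d - n \<or> (d \<le> 2 * n \<and> d - n \<le> g))"
      using less.prems by auto
    then show ?thesis by blast
  next
    case False
    have "nat (d - 2 * n) < nat d" "d - 2 * n \<ge> 1" "g - d + n \<ge> 0"
      using False \<open>n > 0\<close> by auto
    from less.hyps[OF this] obtain d0 g0 where "d0 \<ge> 1" "g0 \<ge> 0" and
      cong: "[d0 = d - 2 * n] (mod (2 * n))" and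
      disc: "discriminant n d0 g0 = discriminant n (d - 2 * n) (g - d + n)" and
      "g0 < d0 - n \<or> (d0 \<le> 2 * n \<and> d0 - n \<le> g0)"
      by blast
    moreover have "[d - 2 * n = d] (mod (2 * n))"
      by (simp add: cong_iff_dvd_diff)
    with cong have "[d0 = d] (mod (2 * n))"
      by (rule cong_trans)
    moreover have "discriminant n d0 g0 = discriminant n d g"
      using disc discriminant_reduce by simp
    ultimately show ?thesis by blast
  qed
qed

lemma less_div_add_one_iff_discriminant_pos:
  fixes n d g :: int
  assumes "n > 0"
  shows "real_of_int g < (real_of_int d)\<^sup>2 / (4 * real_of_int n) + 1 \<longleftrightarrow> discriminant n d g > 0"
proof -
  have "real_of_int g < (real_of_int d)\<^sup>2 / (4 * real_of_int n) + 1 \<longleftrightarrow>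
        real_of_int (4 * n * (g - 1)) < real_of_int (d\<^sup>2)"
    using assms by (simp add: field_simps)
  then show ?thesis
    unfolding discriminant_def by linarith
qed

theorem lemma3p10:
  fixes n d g :: int
  assumes "n \<ge> 2" and "d \<ge> 1" and "g \<ge> 0"
    and "real_of_int g < (real_of_int d)^2 / (4 * real_of_int n) + 1"
  shows "\<exists>d0 g0 :: int. d0 \<ge> 1 \<and> g0 \<ge> 0 \<and> [d0 = d] (mod (2 * n)) \<and>
           d0^2 - 4 * n * (g0 - 1) = d^2 - 4 * n * (g - 1) \<and>
           (g0 < d0 - n \<or>
            (d0 \<le> 2 * n \<and> d0 - n \<le> g0 \<and>
             real_of_int g0 < (real_of_int d0)^2 / (4 * real_of_int n) + 1))"
proof -
  have "n > 0" using assms(1) by simp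
  then obtain d0 g0 where "d0 \<ge> 1" "g0 \<ge> 0" "[d0 = d] (mod (2 * n))" and
    disc: "discriminant n d0 g0 = discriminant n d g" and
    "g0 < d0 - n \<or> (d0 \<le> 2 * n \<and> d0 - n \<le> g0)"
    using discriminant_descent assms(2,3) by blast
  moreover have "real_of_int g0 < (real_of_int d0)\<^sup>2 / (4 * real_of_int n) + 1"
    using assms(4) disc less_div_add_one_iff_discriminant_pos[OF \<open>n > 0\<close>] by simp
  ultimately show ?thesis
    unfolding discriminant_def by blast
qed

end
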